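(* Let $\mathcal{M}=(E,\rho)$ be a $q$-matroid and $\mathcal{Z}=\mathcal{Z}(\mathcal{M})$. Then for all subspaces $V\le E$, \[ \rho(V)=\min_{Z\in\mathcal{Z}}\Big(\rho(Z)+\dim\big((V+Z)/Z\big)\Big). \]
   Context: Let $\mathbb{F}=\mathbb{F}_q$, $E$ a finite-dimensional $\mathbb{F}$-vector space. A $q$-matroid is $\mathcal{M}=(E,\rho)$ with $\rho$ from subspaces of $E$ to $\mathbb{Z}_{\ge0}$ satisfying $0\le\rho(V)\le\dim V$, monotonicity, and submodularity $\rho(V+W)+\rho(V\cap W)\le\rho(V)+\rho(W)$. A flat is $F$ with $\rho(F+\langle x\rangle)>\rho(F)$ for all $x\in E\setminus F$. The cyclic core is $\mathrm{cyc}(V)=\{x\in V\mid\rho(W)=\rho(V)\text{ for all }W\le V\text{ with }W+\langle x\rangle=V\}$; $V$ is cyclic if $\mathrm{cyc}(V)=V$. $\mathcal{Z}(\mathcal{M})$ is the set of cyclic flats. *)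

theory Defs
  imports "HOL-Analysis.Analysis"
begin

text \<open>The ambient space E is modelled as F^n, i.e. the type 'a^'n with 'a a finite field
  (every finite field is some F_q) and 'n a finite index type.\<close>

definition qsub :: "('a::field ^ 'n) set \<Rightarrow> bool" where
  "qsub V \<longleftrightarrow> vec.subspace V"

definition ssum :: "('a::field ^ 'n) set \<Rightarrow> ('a ^ 'n) set \<Rightarrow> ('a ^ 'n) set" where
  "ssum V W = {v + w | v w. v \<in> V \<and> w \<in> W}"

definition qmatroid :: "(('a::{finite,field} ^ 'n) set \<Rightarrow> nat) \<Rightarrow> bool" where
  "qmatroid \<rho> \<longleftrightarrow>
     (\<forall>V. qsub V \<longrightarrow> \<rho> V \<le> vec.dim V) \<and>
     (\<forall>V W. qsub V \<and> qsub W \<and> V \<subseteq> W \<longrightarrow> \<rho> V \<le> \<rho> W) \<and>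
     (\<forall>V W. qsub V \<and> qsub W \<longrightarrow> \<rho> (ssum V W) + \<rho> (V \<inter> W) \<le> \<rho> V + \<rho> W)"

definition qflat :: "(('a::field ^ 'n) set \<Rightarrow> nat) \<Rightarrow> ('a ^ 'n) set \<Rightarrow> bool" where
  "qflat \<rho> F \<longleftrightarrow> qsub F \<and> (\<forall>x. x \<notin> F \<longrightarrow> \<rho> (ssum F (vec.span {x})) > \<rho> F)"

definition cyc :: "(('a::field ^ 'n) set \<Rightarrow> nat) \<Rightarrow> ('a ^ 'n) set \<Rightarrow> ('a ^ 'n) set" where
  "cyc \<rho> V = {x \<in> V. \<forall>W. qsub W \<and> W \<subseteq> V \<and> ssum W (vec.span {x}) = V \<longrightarrow> \<rho> W = \<rho> V}"

definition qcyclic :: "(('a::field ^ 'n) set \<Rightarrow> nat) \<Rightarrow> ('a ^ 'n) set \<Rightarrow> bool" where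
  "qcyclic \<rho> V \<longleftrightarrow> qsub V \<and> cyc \<rho> V = V"

definition cyclic_flats :: "(('a::field ^ 'n) set \<Rightarrow> nat) \<Rightarrow> ('a ^ 'n) set set" where
  "cyclic_flats \<rho> = {Z. qcyclic \<rho> Z \<and> qflat \<rho> Z}"

end

theory Submission
  imports Defs
begin

text \<open>Submodularity lets the rank grow by at most one per added dimension, so
  \<open>\<rho> V \<le> \<rho> (V + Z) \<le> \<rho> Z + dim ((V + Z) / Z)\<close> for every subspace \<open>Z\<close>, with equality
  at \<open>Z = V\<close>. Among the subspaces attaining equality choose \<open>Z\<close> of least rank and, among
  those, of largest dimension. Enlarging \<open>Z\<close> by a vector without raising its rank keeps
  equality and contradicts maximality of the dimension, so \<open>Z\<close> is a flat; a hyperplane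
  \<open>W\<close> of \<open>Z\<close> with smaller rank also attains equality, contradicting minimality of the
  rank, so \<open>Z\<close> is cyclic.\<close>

lemma qsub_span [simp]: "qsub (vec.span S)"
  unfolding qsub_def by simp

lemma span_eq_if_qsub: "qsub V \<Longrightarrow> vec.span V = V"
  unfolding qsub_def by (simp add: vec.span_eq_iff)

lemma ssum_eq_span_Un:
  assumes "qsub V" "qsub W"
  shows "ssum V W = vec.span (V \<union> W)"
  unfolding ssum_def vec.span_Un span_eq_if_qsub[OF assms(1)] span_eq_if_qsub[OF assms(2)] ..

lemma ssum_span_singleton:
  assumes "qsub V"
  shows "ssum V (vec.span {x}) = vec.span (insert x V)"
  unfolding ssum_def using vec.span_Un[of V "{x}"] by (simp add: span_eq_if_qsub[OF assms])

lemma subset_ssum_right: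
  assumes "qsub V" "qsub W"
  shows "W \<subseteq> ssum V W"
  unfolding ssum_eq_span_Un[OF assms] using vec.span_superset by blast

lemma subset_ssum_left:
  assumes "qsub V" "qsub W"
  shows "V \<subseteq> ssum V W"
  unfolding ssum_eq_span_Un[OF assms] using vec.span_superset by blast

lemma dim_span_insert_le: "vec.dim (vec.span (insert x W)) \<le> vec.dim W + 1"
  by (simp add: vec.dim_insert)

lemma dim_span_insert_notin:
  assumes "qsub Z" "x \<notin> Z"
  shows "vec.dim (vec.span (insert x Z)) = vec.dim Z + 1"
  using assms by (simp add: vec.dim_insert span_eq_if_qsub)

lemma qmatroid_rank_mono:
  "qmatroid \<rho> \<Longrightarrow> qsub A \<Longrightarrow> qsub B \<Longrightarrow> A \<subseteq> B \<Longrightarrow> \<rho> A \<le> \<rho> B"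
  unfolding qmatroid_def by blast

lemma qmatroid_rank_span_insert_le:
  assumes "qmatroid \<rho>" "qsub B"
  shows "\<rho> (vec.span (insert x B)) \<le> \<rho> B + 1"
proof -
  have "\<rho> (ssum B (vec.span {x})) + \<rho> (B \<inter> vec.span {x}) \<le> \<rho> B + \<rho> (vec.span {x})"
    using assms unfolding qmatroid_def by simp
  moreover have "\<rho> (vec.span {x}) \<le> vec.dim (vec.span {x})"
    using assms(1) qsub_span unfolding qmatroid_def by blast
  moreover have "vec.dim (vec.span {x}) \<le> 1"
    using dim_span_insert_le[of x "{}"] by simp
  ultimately show ?thesis
    using ssum_span_singleton[OF assms(2)] by simp
qed

lemma qmatroid_rank_le_rank_plus_codim:
  assumes "qmatroid \<rho>" "qsub A" "qsub B" "B \<subseteq> A"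
  shows "\<rho> A \<le> \<rho> B + (vec.dim A - vec.dim B)"
  using assms(3,4)
proof (induction "vec.dim A - vec.dim B" arbitrary: B rule: less_induct)
  case less
  show ?case
  proof (cases "A = B")
    case False
    then obtain x where x: "x \<in> A" "x \<notin> B"
      using less.prems by blast
    define B' where "B' = vec.span (insert x B)"
    have "B' \<subseteq> A"
      unfolding B'_def using x less.prems assms(2) vec.span_minimal unfolding qsub_def by blast
    moreover have dim_B': "vec.dim B' = vec.dim B + 1"
      unfolding B'_def using dim_span_insert_notin less.prems x by blast
    moreover have "vec.dim B' \<le> vec.dim A"
      using \<open>B' \<subseteq> A\<close> vec.dim_subset by blast
    ultimately have "\<rho> A \<le> \<rho> B' + (vec.dim A - vec.dim B')"
      using less.hyps[of B'] unfolding B'_def by simp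
    moreover have "\<rho> B' \<le> \<rho> B + 1"
      unfolding B'_def using qmatroid_rank_span_insert_le assms(1) less.prems by blast
    ultimately show ?thesis
      using dim_B' \<open>vec.dim B' \<le> vec.dim A\<close> by simp
  qed simp
qed

definition rank_estimate :: "(('a::field ^ 'n) set \<Rightarrow> nat) \<Rightarrow> ('a ^ 'n) set \<Rightarrow> ('a ^ 'n) set \<Rightarrow> nat"
  where "rank_estimate \<rho> V Z = \<rho> Z + (vec.dim (ssum V Z) - vec.dim Z)"

lemma rank_le_rank_estimate:
  assumes "qmatroid \<rho>" "qsub V" "qsub Z"
  shows "\<rho> V \<le> rank_estimate \<rho> V Z"
proof -
  have "qsub (ssum V Z)"
    using ssum_eq_span_Un[OF assms(2,3)] by simp
  moreover have "V \<subseteq> ssum V Z" "Z \<subseteq> ssum V Z"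
    using subset_ssum_left subset_ssum_right assms(2,3) by blast+
  ultimately have "\<rho> V \<le> \<rho> (ssum V Z)" "\<rho> (ssum V Z) \<le> rank_estimate \<rho> V Z"
    unfolding rank_estimate_def
    using assms qmatroid_rank_mono qmatroid_rank_le_rank_plus_codim by blast+
  then show ?thesis by simp
qed

lemma rank_estimate_self: "qsub V \<Longrightarrow> rank_estimate \<rho> V V = \<rho> V"
  unfolding rank_estimate_def by (simp add: ssum_eq_span_Un span_eq_if_qsub)

lemma rank_estimate_span_insert_le:
  assumes "qsub V" "qsub Z" "x \<notin> Z" "\<rho> (vec.span (insert x Z)) \<le> \<rho> Z"
  shows "rank_estimate \<rho> V (vec.span (insert x Z)) \<le> rank_estimate \<rho> V Z"
proof -
  define Z' where "Z' = vec.span (insert x Z)"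
  have "V \<subseteq> ssum V Z" "insert x Z \<subseteq> insert x (ssum V Z)"
    using subset_ssum_left subset_ssum_right assms(1,2) by blast+
  then have "V \<union> Z' \<subseteq> vec.span (insert x (ssum V Z))"
    unfolding Z'_def using vec.span_superset vec.span_mono by blast
  then have "ssum V Z' \<subseteq> vec.span (insert x (ssum V Z))"
    unfolding Z'_def ssum_eq_span_Un[OF assms(1) qsub_span] by (intro vec.span_minimal) auto
  then have "vec.dim (ssum V Z') \<le> vec.dim (ssum V Z) + 1"
    using vec.dim_subset dim_span_insert_le order_trans by blast
  moreover have "vec.dim Z' = vec.dim Z + 1"
    unfolding Z'_def using dim_span_insert_notin assms(2,3) .
  moreover have "vec.dim Z' \<le> vec.dim (ssum V Z')" "vec.dim Z \<le> vec.dim (ssum V Z)"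
    using subset_ssum_right assms(1,2) vec.dim_subset unfolding Z'_def by (meson qsub_span)+
  ultimately show ?thesis
    using assms(4) unfolding rank_estimate_def Z'_def by linarith
qed

lemma rank_estimate_le_span_insert:
  assumes "qsub V" "qsub W" "\<rho> W < \<rho> (vec.span (insert x W))"
  shows "rank_estimate \<rho> V W \<le> rank_estimate \<rho> V (vec.span (insert x W))"
proof -
  define Z where "Z = vec.span (insert x W)"
  have "W \<subseteq> Z"
    unfolding Z_def using vec.span_superset by blast
  then have "vec.dim (ssum V W) \<le> vec.dim (ssum V Z)"
    unfolding Z_def ssum_eq_span_Un[OF assms(1,2)] ssum_eq_span_Un[OF assms(1) qsub_span]
    by (intro vec.dim_subset vec.span_mono) auto
  moreover have "vec.dim Z \<le> vec.dim W + 1"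
    unfolding Z_def by (rule dim_span_insert_le)
  moreover have "vec.dim W \<le> vec.dim (ssum V W)" "vec.dim Z \<le> vec.dim (ssum V Z)"
    using subset_ssum_right assms(1,2) vec.dim_subset unfolding Z_def by (meson qsub_span)+
  ultimately show ?thesis
    using assms(3) unfolding rank_estimate_def Z_def by linarith
qed

lemma qflat_if_rank_estimate_extremal:
  assumes "qmatroid \<rho>" "qsub V" "qsub Z" "rank_estimate \<rho> V Z = \<rho> V"
    and least_rank: "\<And>Y. qsub Y \<Longrightarrow> rank_estimate \<rho> V Y = \<rho> V \<Longrightarrow> \<rho> Z \<le> \<rho> Y"
    and greatest_dim: "\<And>Y. qsub Y \<Longrightarrow> rank_estimate \<rho> V Y = \<rho> V \<Longrightarrow> \<rho> Y = \<rho> Z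
      \<Longrightarrow> vec.dim Y \<le> vec.dim Z"
  shows "qflat \<rho> Z"
  unfolding qflat_def
proof (intro conjI allI impI assms(3))
  fix x assume "x \<notin> Z"
  define Z' where "Z' = vec.span (insert x Z)"
  have "qsub Z'"
    unfolding Z'_def by simp
  show "\<rho> Z < \<rho> (ssum Z (vec.span {x}))"
  proof (rule ccontr)
    assume "\<not> ?thesis"
    then have "\<rho> Z' \<le> \<rho> Z"
      unfolding Z'_def ssum_span_singleton[OF assms(3)] by simp
    then have "rank_estimate \<rho> V Z' \<le> rank_estimate \<rho> V Z"
      unfolding Z'_def using rank_estimate_span_insert_le assms(2,3) \<open>x \<notin> Z\<close> by blast
    then have "rank_estimate \<rho> V Z' = \<rho> V"
      using rank_le_rank_estimate[OF assms(1,2) \<open>qsub Z'\<close>] assms(4) by simp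
    moreover from this have "\<rho> Z' = \<rho> Z"
      using least_rank[OF \<open>qsub Z'\<close>] \<open>\<rho> Z' \<le> \<rho> Z\<close> by simp
    ultimately have "vec.dim Z' \<le> vec.dim Z"
      using greatest_dim[OF \<open>qsub Z'\<close>] by simp
    then show False
      using dim_span_insert_notin[OF assms(3) \<open>x \<notin> Z\<close>] unfolding Z'_def by simp
  qed
qed

lemma qcyclic_if_rank_estimate_least_rank:
  assumes "qmatroid \<rho>" "qsub V" "qsub Z" "rank_estimate \<rho> V Z = \<rho> V"
    and least_rank: "\<And>Y. qsub Y \<Longrightarrow> rank_estimate \<rho> V Y = \<rho> V \<Longrightarrow> \<rho> Z \<le> \<rho> Y"
  shows "qcyclic \<rho> Z"
  unfolding qcyclic_def
proof (intro conjI assms(3) equalityI)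
  show "Z \<subseteq> cyc \<rho> Z"
    unfolding cyc_def
  proof (intro subsetI CollectI conjI allI impI)
    fix x W assume "x \<in> Z" and W: "qsub W \<and> W \<subseteq> Z \<and> ssum W (vec.span {x}) = Z"
    then have "qsub W" "W \<subseteq> Z" and Z_eq: "Z = vec.span (insert x W)"
      using ssum_span_singleton by auto
    show "\<rho> W = \<rho> Z"
    proof (rule ccontr)
      assume "\<rho> W \<noteq> \<rho> Z"
      with qmatroid_rank_mono[OF assms(1) \<open>qsub W\<close> assms(3) \<open>W \<subseteq> Z\<close>]
      have "\<rho> W < \<rho> Z" by simp
      then have "rank_estimate \<rho> V W \<le> rank_estimate \<rho> V Z"
        unfolding Z_eq using rank_estimate_le_span_insert assms(2) \<open>qsub W\<close> by blast
      then have "rank_estimate \<rho> V W = \<rho> V"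
        using rank_le_rank_estimate[OF assms(1,2) \<open>qsub W\<close>] assms(4) by simp
      then show False
        using least_rank[OF \<open>qsub W\<close>] \<open>\<rho> W < \<rho> Z\<close> by simp
    qed
  qed
qed (auto simp: cyc_def)

lemma finite_obtain_min_then_max:
  fixes f :: "'a \<Rightarrow> 'b::linorder" and g :: "'a \<Rightarrow> 'c::linorder"
  assumes "finite S" "S \<noteq> {}"
  obtains z where "z \<in> S" "\<And>y. y \<in> S \<Longrightarrow> f z \<le> f y"
    "\<And>y. y \<in> S \<Longrightarrow> f y = f z \<Longrightarrow> g y \<le> g z"
proof -
  define T where "T = {y \<in> S. f y = Min (f ` S)}"
  have "Min (f ` S) \<in> f ` S"
    using assms by simp
  then have "finite T" "T \<noteq> {}"
    unfolding T_def using assms(1) by auto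
  then have "Max (g ` T) \<in> g ` T"
    by simp
  then obtain z where "z \<in> T" "g z = Max (g ` T)"
    by auto
  show thesis
  proof (rule that)
    show "z \<in> S" "\<And>y. y \<in> S \<Longrightarrow> f z \<le> f y"
      using \<open>z \<in> T\<close> assms(1) unfolding T_def by auto
    show "g y \<le> g z" if "y \<in> S" "f y = f z" for y
    proof -
      have "y \<in> T"
        using that \<open>z \<in> T\<close> unfolding T_def by simp
      then show ?thesis
        using \<open>finite T\<close> \<open>g z = Max (g ` T)\<close> by simp
    qed
  qed
qed

theorem corollary4p6:
  fixes \<rho> :: "('a::{finite,field} ^ 'n) set \<Rightarrow> nat" and V :: "('a ^ 'n) set"
  assumes "qmatroid \<rho>" and "qsub V"
  shows "\<rho> V = Min ((\<lambda>Z. \<rho> Z + (vec.dim (ssum V Z) - vec.dim Z)) ` cyclic_flats \<rho>)"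
proof -
  define S where "S = {Z. qsub Z \<and> rank_estimate \<rho> V Z = \<rho> V}"
  have "V \<in> S"
    unfolding S_def using assms(2) rank_estimate_self by blast
  then obtain Z where "Z \<in> S" and least_rank: "\<And>Y. Y \<in> S \<Longrightarrow> \<rho> Z \<le> \<rho> Y"
    and greatest_dim: "\<And>Y. Y \<in> S \<Longrightarrow> \<rho> Y = \<rho> Z \<Longrightarrow> vec.dim Y \<le> vec.dim Z"
    using finite_obtain_min_then_max[where f = \<rho> and g = vec.dim, of S] by auto
  then have "qsub Z" "rank_estimate \<rho> V Z = \<rho> V"
    unfolding S_def by auto
  have "qflat \<rho> Z"
    using qflat_if_rank_estimate_extremal[OF assms \<open>qsub Z\<close> \<open>rank_estimate \<rho> V Z = \<rho> V\<close>]
      least_rank greatest_dim unfolding S_def by blast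
  moreover have "qcyclic \<rho> Z"
    using qcyclic_if_rank_estimate_least_rank[OF assms \<open>qsub Z\<close> \<open>rank_estimate \<rho> V Z = \<rho> V\<close>]
      least_rank unfolding S_def by blast
  ultimately have "Z \<in> cyclic_flats \<rho>"
    unfolding cyclic_flats_def by simp
  moreover have "\<rho> V \<le> rank_estimate \<rho> V Y" if "Y \<in> cyclic_flats \<rho>" for Y
    using that rank_le_rank_estimate assms unfolding cyclic_flats_def qcyclic_def by blast
  ultimately have "Min (rank_estimate \<rho> V ` cyclic_flats \<rho>) = \<rho> V"
    using \<open>Z \<in> S\<close> unfolding S_def by (intro Min_eqI) force+
  then show ?thesis
    unfolding rank_estimate_def by simp
qed

end
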